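(* In the setting of the context, for the iterates of ARDCA started at any $u^0\in\mathbb{D}$, we have $z^k\in\mathbb{D}$, $u^k\in\mathbb{D}$ and $v^k\in\mathbb{D}$ for all $k\ge0$ (for every realization of the random indices).
   Context: Integers $n,t\ge1$, $p,m\ge0$, $\widehat n=n+p+m$, $\mathbb{D}=\{u\in\mathbb{R}^{\widehat n}:u_{n+p+1},\dots,u_{\widehat n}\ge0\}$. Data $A\in\mathbb{R}^{t\times n}$ (columns $A_j$), $B\in\mathbb{R}^{p\times t}$ (rows $B_{j,:}$), $b\in\mathbb{R}^p$, $\mu$-strongly convex $f:\mathbb{R}^t\to\mathbb{R}$, convex $M$-Lipschitz $\phi_i:\mathbb{R}\to\mathbb{R}$ ($i\le n$), convex $g_i:\mathbb{R}^t\to\mathbb{R}$ ($i\le m$) with subgradients bounded in norm by $L_{g_i}$. $L_f(x,u)=f(x)+\langle u_{1:n},A^Tx/n\rangle+\langle u_{n+1:n+p},Bx+b\rangle+\sum_iu_{n+p+i}g_i(x)$, $x^*(u)=\arg\min_xL_f(x,u)$, $d(u)=-L_f(x^*(u),u)$, differentiable on $\mathbb{D}$ with gradient $-[(A^Tx^*(u)/n)^T,(Bx^*(u)+b)^T,g_1(x^*(u)),\dots,g_m(x^*(u))]^T$. $h_i=\frac1n\phi_i^*$ for $i\le n$, $h_i\equiv0$ for $n<i\le n+p$, $h_i(s)=0$ if $s\ge0$ and $+\infty$ else for $i>n+p$. $L_j=\|A_j\|^2/(n^2\mu)$ ($j\le n$), $\|B_{j-n,:}\|^2/\mu$ ($n<j\le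 n+p$), $L_{g_{j-n-p}}^2/\mu$ ($j>n+p$). ARDCA: $\theta_0=1/\widehat n$, $\theta_{k+1}=\frac{\sqrt{\theta_k^4+4\theta_k^2}-\theta_k^2}{2}$; $z^0=u^0$; for $k\ge0$: $v^k=\theta_kz^k+(1-\theta_k)u^k$; $i_k$ uniform on $\{1,\dots,\widehat n\}$; $z^{k+1}_{i_k}=\arg\min_{w\in\mathbb{R}}\widehat n\theta_kL_{i_k}(w-z^k_{i_k})^2+\nabla_{i_k}d(v^k)(w-z^k_{i_k})+h_{i_k}(w)$, $z^{k+1}_j=z^k_j$ ($j\ne i_k$); $u^{k+1}=v^k+\widehat n\theta_k(z^{k+1}-z^k)$. *)

theory Defs
  imports "HOL-Analysis.Analysis"
begin

definition strongly_convex :: "real \<Rightarrow> ('a::real_inner \<Rightarrow> real) \<Rightarrow> bool" where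
  "strongly_convex mu f \<longleftrightarrow> (\<forall>x y. \<forall>l::real. 0 \<le> l \<and> l \<le> 1 \<longrightarrow>
     f (l *\<^sub>R x + (1 - l) *\<^sub>R y) \<le> l * f x + (1 - l) * f y - mu / 2 * l * (1 - l) * (norm (x - y))\<^sup>2)"

definition is_subgrad :: "('a::real_inner \<Rightarrow> real) \<Rightarrow> 'a \<Rightarrow> 'a \<Rightarrow> bool" where
  "is_subgrad g x s \<longleftrightarrow> (\<forall>y. g y \<ge> g x + s \<bullet> (y - x))"

definition fconj :: "(real \<Rightarrow> real) \<Rightarrow> real \<Rightarrow> ereal" where
  "fconj phi s = (SUP x. ereal (s * x - phi x))"

(* dual vectors u in R^{nhat}, represented as nat => real with coordinates 1..nhat *)
definition domD :: "nat \<Rightarrow> nat \<Rightarrow> nat \<Rightarrow> (nat \<Rightarrow> real) set" where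
  "domD n p m = {u. \<forall>j\<in>{n+p+1..n+p+m}. 0 \<le> u j}"

(* Lagrangian L_f(x,u); A j = column A_j (j=1..n), B j = row B_{j,:} (j=1..p) *)
definition Lag :: "nat \<Rightarrow> nat \<Rightarrow> nat \<Rightarrow> ('t::real_inner \<Rightarrow> real) \<Rightarrow> (nat \<Rightarrow> 't) \<Rightarrow> (nat \<Rightarrow> 't)
     \<Rightarrow> (nat \<Rightarrow> real) \<Rightarrow> (nat \<Rightarrow> 't \<Rightarrow> real) \<Rightarrow> 't \<Rightarrow> (nat \<Rightarrow> real) \<Rightarrow> real" where
  "Lag n p m f A B b g x u = f x + (\<Sum>j=1..n. u j * ((A j \<bullet> x) / real n))
     + (\<Sum>j=1..p. u (n+j) * (B j \<bullet> x + b j)) + (\<Sum>j=1..m. u (n+p+j) * g j x)"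

definition xstar where
  "xstar n p m f A B b g u = (SOME x. \<forall>y. Lag n p m f A B b g x u \<le> Lag n p m f A B b g y u)"

definition grad_d where
  "grad_d n p m f A B b g u j =
     (let x = xstar n p m f A B b g u in
      if j \<le> n then - ((A j \<bullet> x) / real n)
      else if j \<le> n + p then - (B (j - n) \<bullet> x + b (j - n))
      else - g (j - n - p) x)"

definition hfun :: "nat \<Rightarrow> nat \<Rightarrow> (nat \<Rightarrow> real \<Rightarrow> real) \<Rightarrow> nat \<Rightarrow> real \<Rightarrow> ereal" where
  "hfun n p phi i s =
     (if i \<le> n then ereal (1 / real n) * fconj (phi i) s
      else if i \<le> n + p then 0
      else (if 0 \<le> s then 0 else \<infinity>))"

definition Lconst :: "nat \<Rightarrow> nat \<Rightarrow> real \<Rightarrow> (nat \<Rightarrow> 't::real_inner) \<Rightarrow> (nat \<Rightarrow> 't) \<Rightarrow> (nat \<Rightarrow> real) \<Rightarrow> nat \<Rightarrow> real" where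
  "Lconst n p mu A B Lg j =
     (if j \<le> n then (norm (A j))\<^sup>2 / ((real n)\<^sup>2 * mu)
      else if j \<le> n + p then (norm (B (j - n)))\<^sup>2 / mu
      else (Lg (j - n - p))\<^sup>2 / mu)"

primrec theta :: "nat \<Rightarrow> nat \<Rightarrow> real" where
  "theta nh 0 = 1 / real nh"
| "theta nh (Suc k) = (sqrt (theta nh k ^ 4 + 4 * theta nh k ^ 2) - theta nh k ^ 2) / 2"

(* ARDCA iterates z, u, v driven by the index sequence ik (one realization);
   z^{k+1}_{i_k} is required to be a minimizer of the coordinate subproblem *)
definition ardca :: "nat \<Rightarrow> nat \<Rightarrow> nat \<Rightarrow> (nat \<Rightarrow> real) \<Rightarrow> (nat \<Rightarrow> real \<Rightarrow> ereal) \<Rightarrow> ((nat \<Rightarrow> real) \<Rightarrow> nat \<Rightarrow> real)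
     \<Rightarrow> (nat \<Rightarrow> nat) \<Rightarrow> (nat \<Rightarrow> nat \<Rightarrow> real) \<Rightarrow> (nat \<Rightarrow> nat \<Rightarrow> real) \<Rightarrow> (nat \<Rightarrow> nat \<Rightarrow> real) \<Rightarrow> bool" where
  "ardca n p m L h grad ik z u v \<longleftrightarrow>
     (let nh = n + p + m in
      z 0 = u 0 \<and>
      (\<forall>k. v k = (\<lambda>j. theta nh k * z k j + (1 - theta nh k) * u k j)) \<and>
      (\<forall>k. \<forall>j. j \<noteq> ik k \<longrightarrow> z (Suc k) j = z k j) \<and>
      (\<forall>k. \<forall>w. ereal (real nh * theta nh k * L (ik k) * (z (Suc k) (ik k) - z k (ik k))\<^sup>2
                 + grad (v k) (ik k) * (z (Suc k) (ik k) - z k (ik k))) + h (ik k) (z (Suc k) (ik k))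
             \<le> ereal (real nh * theta nh k * L (ik k) * (w - z k (ik k))\<^sup>2
                 + grad (v k) (ik k) * (w - z k (ik k))) + h (ik k) w) \<and>
      (\<forall>k. u (Suc k) = (\<lambda>j. v k j + real nh * theta nh k * (z (Suc k) j - z k j))))"

end

theory Submission
  imports Defs
begin

(* On a constrained coordinate j > n + p the function h_j is the indicator of [0, \<infinity>), so a
   negative coordinate minimizer would have infinite value and every z^k stays feasible.
   Writing N = n + p + m, the momentum iterate satisfies
     u^{k+1}_j - N \<theta>_k z^{k+1}_j = (1 - \<theta>_k) u^k_j + (1 - N) \<theta>_k z^k_j =: r_k,
   and r_k \<ge> 0 propagates because N \<theta>_k (1 - \<theta>_{k+1}) \<ge> (N - 1) \<theta>_{k+1}, a consequence of
   \<theta>_{k+1}^2 = \<theta>_k^2 (1 - \<theta>_{k+1}) and \<theta>_k \<le> 1/N. Hence u^k \<ge> 0, and v^k is a convex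
   combination of z^k and u^k. Only the shape of the h_j matters. *)

lemma theta_Suc_sq: "theta nh (Suc k)^2 = theta nh k^2 * (1 - theta nh (Suc k))"
proof -
  define t where "t = theta nh k"
  define w where "w = sqrt (t^4 + 4 * t^2)"
  have w_sq: "w^2 = t^4 + 4 * t^2" by (simp add: w_def)
  have "theta nh (Suc k) = (w - t^2) / 2" by (simp add: t_def w_def)
  moreover have "((w - t^2) / 2)^2 - t^2 * (1 - (w - t^2) / 2) = (w^2 - t^4 - 4 * t^2) / 4"
    by (simp add: power2_eq_square power4_eq_xxxx field_simps)
  ultimately show ?thesis using w_sq by (simp add: t_def)
qed

lemma theta_pos: "0 < nh \<Longrightarrow> 0 < theta nh k"
proof (induction k)
  case (Suc k)
  then have "(theta nh k ^ 2)^2 < theta nh k ^ 4 + 4 * theta nh k ^ 2" by simp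
  then show ?case by (simp add: real_less_rsqrt)
qed simp

(* From here on \<theta>_{k+1} is handled through theta_Suc_sq instead of its closed form. *)
declare theta.simps(2) [simp del]

lemma quadratic_root_bounds:
  fixes t x :: real
  assumes "0 < t" "0 < x" "x^2 = t^2 * (1 - x)"
  shows "x < t" "t * (1 - t) < x"
proof -
  have "x^2 < t^2" using assms by (simp add: mult_less_cancel_left_pos)
  then show "x < t" using assms(1) by (simp add: power_less_imp_less_base)
  show "t * (1 - t) < x"
  proof (rule ccontr)
    assume le: "\<not> t * (1 - t) < x"
    then have "x^2 \<le> (t * (1 - t))^2" using assms(2) by (intro power_mono) auto
    then have "1 - x \<le> (1 - t)^2" using assms(1,3) by (simp add: power_mult_distrib)
    then show False using le assms(1) by (simp add: power2_eq_square algebra_simps)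
  qed
qed

lemma theta_Suc_bounds:
  assumes "0 < nh"
  shows "theta nh (Suc k) < theta nh k" "theta nh k * (1 - theta nh k) < theta nh (Suc k)"
  using quadratic_root_bounds[OF theta_pos theta_pos theta_Suc_sq] assms by auto

lemma theta_le: "0 < nh \<Longrightarrow> theta nh k \<le> 1 / real nh"
proof (induction k)
  case (Suc k)
  then show ?case using theta_Suc_bounds(1)[of nh k] by simp
qed simp

lemma theta_Suc_weight:
  assumes "0 < nh"
  shows "(real nh - 1) * theta nh (Suc k) \<le> real nh * theta nh k * (1 - theta nh (Suc k))"
proof -
  define N where "N = real nh"
  define t where "t = theta nh k"
  define x where "x = theta nh (Suc k)"
  have t: "0 < t" "N * t \<le> 1" and x: "0 < x"
    using theta_pos[OF assms] theta_le[OF assms, of k] assms by (auto simp: N_def t_def x_def field_simps)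
  have "(N - 1) * t = N * t - N * t * t + (N * t * t - t)" by (simp add: algebra_simps)
  also have "\<dots> \<le> N * (t * (1 - t))" using t by (simp add: algebra_simps mult_right_mono)
  also have "\<dots> \<le> N * x" using theta_Suc_bounds(2)[OF assms, of k] assms by (simp add: N_def t_def x_def)
  finally have "(N - 1) * t * x \<le> N * x^2" using x by (simp add: power2_eq_square mult_right_mono)
  also have "\<dots> = N * (t^2 * (1 - x))" using theta_Suc_sq[of nh k] by (simp add: t_def x_def)
  also have "\<dots> = (N * t * (1 - x)) * t" by (simp add: power2_eq_square algebra_simps)
  finally show ?thesis using t(1) by (simp add: N_def t_def x_def mult.commute mult.left_commute)
qed

lemma theta_le_1: "0 < nh \<Longrightarrow> theta nh k \<le> 1"
  using theta_le[of nh k] by (simp add: order_trans)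

lemma momentum_nonneg:
  fixes N :: real and \<theta> z u :: "nat \<Rightarrow> real"
  assumes N: "0 \<le> N" "N * \<theta> 0 \<le> 1"
    and \<theta>: "\<And>k. 0 \<le> \<theta> k" "\<And>k. \<theta> k \<le> 1"
    and weight: "\<And>k. (N - 1) * \<theta> (Suc k) \<le> N * \<theta> k * (1 - \<theta> (Suc k))"
    and z: "\<And>k. 0 \<le> z k"
    and u_0: "u 0 = z 0"
    and u_Suc: "\<And>k. u (Suc k) = \<theta> k * z k + (1 - \<theta> k) * u k + N * \<theta> k * (z (Suc k) - z k)"
  shows "0 \<le> u k"
proof -
  define r where "r k = (1 - \<theta> k) * u k + (1 - N) * \<theta> k * z k" for k
  have u_Suc_r: "u (Suc k) = r k + N * \<theta> k * z (Suc k)" for k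
    by (simp add: u_Suc r_def algebra_simps)
  have r_nonneg: "0 \<le> r k" for k
  proof (induction k)
    case 0
    have "r 0 = (1 - N * \<theta> 0) * z 0" by (simp add: r_def u_0 algebra_simps)
    then show ?case using N(2) z[of 0] by simp
  next
    case (Suc k)
    have "r (Suc k) = (1 - \<theta> (Suc k)) * r k
        + (N * \<theta> k * (1 - \<theta> (Suc k)) - (N - 1) * \<theta> (Suc k)) * z (Suc k)"
      by (simp add: r_def u_Suc_r algebra_simps)
    then show ?case using Suc \<theta>(2)[of "Suc k"] weight[of k] z[of "Suc k"] by simp
  qed
  show ?thesis
  proof (cases k)
    case (Suc k')
    then show ?thesis using u_Suc_r[of k'] r_nonneg[of k'] N(1) \<theta>(1)[of k'] z[of k] by simp
  qed (simp add: u_0 z)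
qed

lemma ardca_z_mem_domD:
  assumes ardca: "ardca n p m L (hfun n p phi) grad ik z u v" and z_0: "z 0 \<in> domD n p m"
  shows "z k \<in> domD n p m"
proof (induction k)
  case (Suc k)
  let ?nh = "n + p + m" and ?i = "ik k"
  have keep: "z (Suc k) j = z k j" if "j \<noteq> ?i" for j
    using ardca that by (simp add: ardca_def Let_def)
  have minimal: "ereal (real ?nh * theta ?nh k * L ?i * (z (Suc k) ?i - z k ?i)\<^sup>2
        + grad (v k) ?i * (z (Suc k) ?i - z k ?i)) + hfun n p phi ?i (z (Suc k) ?i)
      \<le> ereal (real ?nh * theta ?nh k * L ?i * (0 - z k ?i)\<^sup>2
        + grad (v k) ?i * (0 - z k ?i)) + hfun n p phi ?i 0"
    using ardca unfolding ardca_def Let_def by blast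
  show ?case unfolding domD_def
  proof (intro CollectI ballI)
    fix j assume j: "j \<in> {n+p+1..n+p+m}"
    show "0 \<le> z (Suc k) j"
    proof (cases "j = ?i")
      case True
      have "hfun n p phi j s = (if 0 \<le> s then 0 else \<infinity>)" for s
        using j by (simp add: hfun_def)
      then show ?thesis using minimal True by (auto split: if_splits)
    qed (use Suc j keep in \<open>auto simp: domD_def\<close>)
  qed
qed (rule z_0)

lemma ardca_u_mem_domD:
  assumes ardca: "ardca n p m L h grad ik z u v" and nh: "0 < n + p + m"
    and z: "\<And>k. z k \<in> domD n p m"
  shows "u k \<in> domD n p m"
  unfolding domD_def
proof (intro CollectI ballI)
  fix j assume j: "j \<in> {n+p+1..n+p+m}"
  let ?nh = "n + p + m"
  have "z 0 = u 0" and u_Suc: "u (Suc k) j = theta ?nh k * z k j + (1 - theta ?nh k) * u k j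
      + real ?nh * theta ?nh k * (z (Suc k) j - z k j)" for k
    using ardca by (simp_all add: ardca_def Let_def algebra_simps)
  show "0 \<le> u k j"
  proof (rule momentum_nonneg[where N = "real ?nh" and \<theta> = "theta ?nh"
        and z = "\<lambda>k. z k j" and u = "\<lambda>k. u k j"])
    show "real ?nh * theta ?nh 0 \<le> 1" using nh by simp
    show "0 \<le> z k j" for k using z[of k] j by (simp add: domD_def)
    show "0 \<le> theta ?nh k" "theta ?nh k \<le> 1" for k
      using theta_pos[OF nh, of k] theta_le_1[OF nh, of k] by simp_all
    show "(real ?nh - 1) * theta ?nh (Suc k) \<le> real ?nh * theta ?nh k * (1 - theta ?nh (Suc k))" for k
      by (rule theta_Suc_weight[OF nh])
  qed (use \<open>z 0 = u 0\<close> u_Suc in simp_all)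
qed

lemma ardca_v_mem_domD:
  assumes ardca: "ardca n p m L h grad ik z u v" and nh: "0 < n + p + m"
    and "z k \<in> domD n p m" "u k \<in> domD n p m"
  shows "v k \<in> domD n p m"
proof -
  have "v k = (\<lambda>j. theta (n + p + m) k * z k j + (1 - theta (n + p + m) k) * u k j)"
    using ardca by (simp add: ardca_def Let_def)
  then show ?thesis
    using assms(3,4) less_imp_le[OF theta_pos[OF nh]] theta_le_1[OF nh, of k]
    by (auto simp: domD_def)
qed

theorem lemma3:
  fixes n p m :: nat and mu M :: real
    and A :: "nat \<Rightarrow> real^'t" and B :: "nat \<Rightarrow> real^'t" and b :: "nat \<Rightarrow> real"
    and f :: "real^'t \<Rightarrow> real" and phi :: "nat \<Rightarrow> real \<Rightarrow> real"
    and g :: "nat \<Rightarrow> real^'t \<Rightarrow> real" and Lg :: "nat \<Rightarrow> real"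
    and ik :: "nat \<Rightarrow> nat" and z u v :: "nat \<Rightarrow> nat \<Rightarrow> real"
  assumes "n \<ge> 1"
    and "mu > 0" and "strongly_convex mu f"
    and "\<And>i. i \<in> {1..n} \<Longrightarrow> convex_on UNIV (phi i) \<and> M-lipschitz_on UNIV (phi i)"
    and "\<And>i. i \<in> {1..m} \<Longrightarrow> convex_on UNIV (g i)"
    and "\<And>i x s. i \<in> {1..m} \<Longrightarrow> is_subgrad (g i) x s \<Longrightarrow> norm s \<le> Lg i"
    and "\<And>k. ik k \<in> {1..n+p+m}"
    and "u 0 \<in> domD n p m"
    and "ardca n p m (Lconst n p mu A B Lg) (hfun n p phi) (grad_d n p m f A B b g) ik z u v"
  shows "\<forall>k. z k \<in> domD n p m \<and> u k \<in> domD n p m \<and> v k \<in> domD n p m"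
proof -
  have nh: "0 < n + p + m" using assms(1) by simp
  have "z 0 = u 0" using assms(9) by (simp add: ardca_def Let_def)
  then have z: "z k \<in> domD n p m" for k using ardca_z_mem_domD[OF assms(9)] assms(8) by simp
  have u: "u k \<in> domD n p m" for k using ardca_u_mem_domD[OF assms(9) nh z] .
  show ?thesis using ardca_v_mem_domD[OF assms(9) nh z u] z u by blast
qed

end
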